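(* Let $(X,\|\cdot\|_X)$ be a Banach space, $\mathcal{K}\subset X$ compact, and $\gamma\ge2\,\mathrm{rad}(\mathcal{K})$. Then $\lim_{n\to\infty}d_n^\gamma(\mathcal{K})_X=0$.
   Context: $\mathrm{rad}(\mathcal{K})=\inf_{g\in X}\sup_{f\in\mathcal{K}}\|f-g\|_X$. For $k\ge1$ and a norm $\|\cdot\|_{Y_k}$ on $\mathbb{R}^k$ let $B_{Y_k}=\{y\in\mathbb{R}^k:\|y\|_{Y_k}\le1\}$. For $\gamma\ge0$, the fixed Lipschitz width is $d^\gamma(\mathcal{K},Y_k)_X=\inf_{\Phi}\sup_{f\in\mathcal{K}}\inf_{y\in B_{Y_k}}\|f-\Phi(y)\|_X$, the infimum over all maps $\Phi:B_{Y_k}\to X$ with $\|\Phi(y)-\Phi(y')\|_X\le\gamma\|y-y'\|_{Y_k}$ for all $y,y'\in B_{Y_k}$. The Lipschitz width is $d_n^\gamma(\mathcal{K})_X=\inf_{1\le k\le n}\inf_{\|\cdot\|_{Y_k}}d^\gamma(\mathcal{K},Y_k)_X$, the inner infimum over all norms on $\mathbb{R}^k$. *)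

theory Defs
  imports "HOL-Analysis.Analysis"
begin

text \<open>R^k is represented as the real functions on nat vanishing outside {0..<k}.\<close>

definition Rk :: "nat \<Rightarrow> (nat \<Rightarrow> real) set" where
  "Rk k = {y. \<forall>i\<ge>k. y i = 0}"

definition is_norm_on_Rk :: "nat \<Rightarrow> ((nat \<Rightarrow> real) \<Rightarrow> real) \<Rightarrow> bool" where
  "is_norm_on_Rk k N \<longleftrightarrow>
     (\<forall>y\<in>Rk k. \<forall>z\<in>Rk k. N (\<lambda>i. y i + z i) \<le> N y + N z) \<and>
     (\<forall>y\<in>Rk k. \<forall>c::real. N (\<lambda>i. c * y i) = \<bar>c\<bar> * N y) \<and>
     (\<forall>y\<in>Rk k. N y = 0 \<longleftrightarrow> y = (\<lambda>i. 0))"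

definition unit_ball_Rk :: "nat \<Rightarrow> ((nat \<Rightarrow> real) \<Rightarrow> real) \<Rightarrow> (nat \<Rightarrow> real) set" where
  "unit_ball_Rk k N = {y \<in> Rk k. N y \<le> 1}"

text \<open>Chebyshev radius; values in ennreal so that sup over the empty set is 0.\<close>
definition cheb_rad :: "'a::real_normed_vector set \<Rightarrow> ennreal" where
  "cheb_rad K = (INF g. SUP f\<in>K. ennreal (norm (f - g)))"

definition fixed_lip_width ::
  "real \<Rightarrow> 'a::real_normed_vector set \<Rightarrow> nat \<Rightarrow> ((nat \<Rightarrow> real) \<Rightarrow> real) \<Rightarrow> ennreal" where
  "fixed_lip_width \<gamma> K k N =
     (INF \<Phi>\<in>{\<Phi> :: (nat \<Rightarrow> real) \<Rightarrow> 'a. \<forall>y\<in>unit_ball_Rk k N. \<forall>y'\<in>unit_ball_Rk k N.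
                 norm (\<Phi> y - \<Phi> y') \<le> \<gamma> * N (\<lambda>i. y i - y' i)}.
        SUP f\<in>K. INF y\<in>unit_ball_Rk k N. ennreal (norm (f - \<Phi> y)))"

definition lip_width :: "real \<Rightarrow> 'a::real_normed_vector set \<Rightarrow> nat \<Rightarrow> ennreal" where
  "lip_width \<gamma> K n =
     (INF k\<in>{1..n}. INF N\<in>{N. is_norm_on_Rk k N}. fixed_lip_width \<gamma> K k N)"

end

theory Submission
  imports Defs
begin

text \<open>For \<open>\<gamma> > 0\<close> the hypothesis gives \<open>rad K < \<gamma>\<close>, so \<open>K\<close> lies in the ball of
  radius \<open>\<gamma>\<close> about some point \<open>g\<close>. Let \<open>p\<^sub>0, \<dots>, p\<^sub>m\<^sub>-\<^sub>1\<close> be \<open>g\<close> together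
  with an \<open>\<epsilon>\<close>-net of the compact set \<open>K\<close>. On the \<open>\<ell>\<^sub>1\<close> unit ball of \<open>\<real>\<^sup>m\<close> the map
  \<open>y \<mapsto> g + \<Sum> y\<^sub>i (p\<^sub>i - g)\<close> is \<open>\<gamma>\<close>-Lipschitz and sends the unit vectors to the
  \<open>p\<^sub>i\<close>, so \<open>d\<^sub>n\<^sup>\<gamma>(K) \<le> \<epsilon>\<close> for all \<open>n \<ge> m\<close>. For \<open>\<gamma> = 0\<close> the radius is \<open>0\<close>
  and the constant map onto a near-centre already does.\<close>

lemma is_norm_on_Rk_l1: "is_norm_on_Rk k (\<lambda>y. \<Sum>i<k. \<bar>y i\<bar>)"
  unfolding is_norm_on_Rk_def
proof (intro conjI ballI allI)
  fix y z :: "nat \<Rightarrow> real"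
  show "(\<Sum>i<k. \<bar>y i + z i\<bar>) \<le> (\<Sum>i<k. \<bar>y i\<bar>) + (\<Sum>i<k. \<bar>z i\<bar>)"
    by (simp add: sum.distrib[symmetric] sum_mono abs_triangle_ineq)
next
  fix y :: "nat \<Rightarrow> real" and c :: real
  show "(\<Sum>i<k. \<bar>c * y i\<bar>) = \<bar>c\<bar> * (\<Sum>i<k. \<bar>y i\<bar>)"
    by (simp add: abs_mult sum_distrib_left)
next
  fix y :: "nat \<Rightarrow> real"
  assume "y \<in> Rk k"
  then have "y i = 0" if "i \<notin> {..<k}" for i
    using that by (simp add: Rk_def)
  then show "((\<Sum>i<k. \<bar>y i\<bar>) = 0) = (y = (\<lambda>i. 0))"
    by (auto simp: sum_nonneg_eq_0_iff)
qed

definition cross_polytope_map :: "'a \<Rightarrow> (nat \<Rightarrow> 'a) \<Rightarrow> nat \<Rightarrow> (nat \<Rightarrow> real) \<Rightarrow> 'a::real_vector"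
  where "cross_polytope_map g p k y = g + (\<Sum>i<k. y i *\<^sub>R (p i - g))"

lemma cross_polytope_map_lipschitz:
  fixes p :: "nat \<Rightarrow> 'a::real_normed_vector"
  assumes "\<And>i. i < k \<Longrightarrow> norm (p i - g) \<le> \<gamma>"
  shows "norm (cross_polytope_map g p k y - cross_polytope_map g p k y')
           \<le> \<gamma> * (\<Sum>i<k. \<bar>y i - y' i\<bar>)"
proof -
  have "norm (cross_polytope_map g p k y - cross_polytope_map g p k y')
          = norm (\<Sum>i<k. (y i - y' i) *\<^sub>R (p i - g))"
    by (simp add: cross_polytope_map_def sum_subtractf[symmetric] scaleR_diff_left)
  also have "\<dots> \<le> (\<Sum>i<k. \<bar>y i - y' i\<bar> * norm (p i - g))"
    by (rule norm_sum[THEN order_trans]) simp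
  also have "\<dots> \<le> (\<Sum>i<k. \<bar>y i - y' i\<bar> * \<gamma>)"
    using assms by (intro sum_mono mult_left_mono) auto
  finally show ?thesis
    by (simp add: sum_distrib_left mult.commute)
qed

lemma cross_polytope_map_unit_vector:
  assumes "i < k"
  shows "cross_polytope_map g p k (\<lambda>j. if j = i then 1 else 0) = p i"
proof -
  have "(\<Sum>j<k. (if j = i then 1 else 0) *\<^sub>R (p j - g)) = (\<Sum>j<k. if j = i then p j - g else 0)"
    by (rule sum.cong) auto
  with assms show ?thesis
    by (simp add: cross_polytope_map_def)
qed

lemma fixed_lip_width_l1_le_net:
  fixes p :: "nat \<Rightarrow> 'a::real_normed_vector"
  assumes "\<And>i. i < k \<Longrightarrow> norm (p i - g) \<le> \<gamma>"
    and "\<And>f. f \<in> K \<Longrightarrow> \<exists>i<k. norm (f - p i) \<le> \<epsilon>"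
  shows "fixed_lip_width \<gamma> K k (\<lambda>y. \<Sum>i<k. \<bar>y i\<bar>) \<le> ennreal \<epsilon>"
proof -
  let ?N = "\<lambda>y. \<Sum>i<k. \<bar>y i\<bar>" and ?\<Phi> = "cross_polytope_map g p k"
  have "fixed_lip_width \<gamma> K k ?N \<le> (SUP f\<in>K. INF y\<in>unit_ball_Rk k ?N. ennreal (norm (f - ?\<Phi> y)))"
    unfolding fixed_lip_width_def
    by (rule INF_lower) (simp add: cross_polytope_map_lipschitz assms(1))
  also have "\<dots> \<le> ennreal \<epsilon>"
  proof (rule SUP_least)
    fix f
    assume "f \<in> K"
    then obtain i where i: "i < k" "norm (f - p i) \<le> \<epsilon>"
      using assms(2) by blast
    define e where "e = (\<lambda>j. if j = i then 1 else (0::real))"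
    have "e \<in> unit_ball_Rk k ?N"
      using i by (simp add: unit_ball_Rk_def Rk_def e_def)
    moreover have "?\<Phi> e = p i"
      unfolding e_def by (rule cross_polytope_map_unit_vector[OF i(1)])
    ultimately show "(INF y\<in>unit_ball_Rk k ?N. ennreal (norm (f - ?\<Phi> y))) \<le> ennreal \<epsilon>"
      using i(2) by (intro INF_lower2[of e]) (auto intro: ennreal_leI)
  qed
  finally show ?thesis .
qed

lemma lip_width_le_net:
  fixes K :: "'a::real_normed_vector set"
  assumes "finite F" "g \<in> F"
    and "\<And>p. p \<in> F \<Longrightarrow> norm (p - g) \<le> \<gamma>"
    and "\<And>f. f \<in> K \<Longrightarrow> \<exists>p\<in>F. norm (f - p) \<le> \<epsilon>"
    and "card F \<le> n"
  shows "lip_width \<gamma> K n \<le> ennreal \<epsilon>"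
proof -
  define k where "k = card F"
  obtain p where "bij_betw p {0..<k} F"
    using ex_bij_betw_nat_finite[OF assms(1)] unfolding k_def by blast
  then have F: "F = p ` {..<k}"
    by (simp add: bij_betw_def atLeast0LessThan)
  have "1 \<le> k"
    using assms(1,2) by (auto simp: k_def Suc_le_eq card_gt_0_iff)
  then have "lip_width \<gamma> K n \<le> (INF N\<in>{N. is_norm_on_Rk k N}. fixed_lip_width \<gamma> K k N)"
    unfolding lip_width_def using assms(5) k_def by (intro INF_lower) auto
  also have "\<dots> \<le> fixed_lip_width \<gamma> K k (\<lambda>y. \<Sum>i<k. \<bar>y i\<bar>)"
    using is_norm_on_Rk_l1 by (intro INF_lower) auto
  also have "\<dots> \<le> ennreal \<epsilon>"
  proof (rule fixed_lip_width_l1_le_net)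
    show "norm (p i - g) \<le> \<gamma>" if "i < k" for i
      using that assms(3) unfolding F by auto
    show "\<exists>i<k. norm (f - p i) \<le> \<epsilon>" if "f \<in> K" for f
      using that assms(4) unfolding F by auto
  qed
  finally show ?thesis .
qed

lemma cheb_rad_less_imp_center:
  fixes K :: "'a::real_normed_vector set"
  assumes "cheb_rad K < ennreal r"
  obtains g where "\<And>f. f \<in> K \<Longrightarrow> norm (f - g) < r"
proof -
  obtain g where g: "(SUP f\<in>K. ennreal (norm (f - g))) < ennreal r"
    using assms unfolding cheb_rad_def by (auto simp: INF_less_iff)
  have "norm (f - g) < r" if "f \<in> K" for f
    using SUP_lessD[OF g that] by (simp add: ennreal_less_iff)
  then show ?thesis
    using that by blast
qed

lemma cheb_rad_less_of_twice_le:
  fixes K :: "'a::real_normed_vector set"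
  assumes "2 * cheb_rad K \<le> ennreal \<gamma>" and "\<gamma> > 0"
  shows "cheb_rad K < ennreal \<gamma>"
proof -
  have "cheb_rad K \<le> 2 * cheb_rad K"
    by (simp add: mult_2)
  then have "cheb_rad K \<le> ennreal \<gamma>"
    using assms(1) by order
  moreover have "cheb_rad K \<noteq> ennreal \<gamma>"
  proof
    assume "cheb_rad K = ennreal \<gamma>"
    then have "ennreal (2 * \<gamma>) \<le> ennreal \<gamma>"
      using assms by (simp add: ennreal_mult')
    then show False
      using assms(2) by (simp add: ennreal_le_iff)
  qed
  ultimately show ?thesis
    by simp
qed

lemma compact_centered_net:
  fixes K :: "'a::real_normed_vector set"
  assumes "compact K" "\<gamma> \<ge> 0" "2 * cheb_rad K \<le> ennreal \<gamma>" "\<epsilon> > 0"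
  obtains F g where "finite F" "g \<in> F" "\<And>p. p \<in> F \<Longrightarrow> norm (p - g) \<le> \<gamma>"
    "\<And>f. f \<in> K \<Longrightarrow> \<exists>p\<in>F. norm (f - p) \<le> \<epsilon>"
proof (cases "\<gamma> = 0")
  case True
  then have "cheb_rad K < ennreal \<epsilon>"
    using assms(3,4) by simp
  then obtain g where "\<And>f. f \<in> K \<Longrightarrow> norm (f - g) < \<epsilon>"
    using cheb_rad_less_imp_center by blast
  then show ?thesis
    using that[of "{g}" g] True by fastforce
next
  case False
  then have "cheb_rad K < ennreal \<gamma>"
    using assms(2,3) by (intro cheb_rad_less_of_twice_le) auto
  then obtain g where g: "\<And>f. f \<in> K \<Longrightarrow> norm (f - g) < \<gamma>"
    using cheb_rad_less_imp_center by blast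
  obtain T where T: "T \<subseteq> K" "finite T" "K \<subseteq> (\<Union>x\<in>T. ball x \<epsilon>)"
    using compactE_image[OF assms(1), of K "\<lambda>x. ball x \<epsilon>"] assms(4) by force
  show ?thesis
  proof (rule that[of "insert g T" g])
    show "norm (p - g) \<le> \<gamma>" if "p \<in> insert g T" for p
      using that T(1) g assms(2) by (auto intro: less_imp_le)
    show "\<exists>p\<in>insert g T. norm (f - p) \<le> \<epsilon>" if "f \<in> K" for f
      using that T(3) by (force simp: dist_norm norm_minus_commute)
  qed (use T(2) in auto)
qed

lemma ennreal_tendsto_0I:
  assumes "\<And>\<epsilon>. \<epsilon> > 0 \<Longrightarrow> eventually (\<lambda>n. f n \<le> ennreal \<epsilon>) F"
  shows "(f \<longlongrightarrow> 0) F"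
proof (rule order_tendstoI)
  fix a :: ennreal
  assume "0 < a"
  then obtain \<epsilon> where "\<epsilon> > 0" "ennreal \<epsilon> < a"
    by (metis dense ennreal_cases ennreal_less_zero_iff order.strict_trans top.not_eq_extremum)
  then show "eventually (\<lambda>n. f n < a) F"
    using assms[of \<epsilon>] by (auto elim: eventually_mono)
qed simp

theorem corollary4p3:
  fixes K :: "'a::banach set" and \<gamma> :: real
  assumes "compact K"
    and "\<gamma> \<ge> 0"
    and "ennreal \<gamma> \<ge> 2 * cheb_rad K"
  shows "(\<lambda>n. lip_width \<gamma> K n) \<longlonglongrightarrow> 0"
proof (rule ennreal_tendsto_0I)
  fix \<epsilon> :: real
  assume "\<epsilon> > 0"
  obtain F g where "finite F" "g \<in> F" "\<And>p. p \<in> F \<Longrightarrow> norm (p - g) \<le> \<gamma>"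
    "\<And>f. f \<in> K \<Longrightarrow> \<exists>p\<in>F. norm (f - p) \<le> \<epsilon>"
    using compact_centered_net[OF assms \<open>\<epsilon> > 0\<close>] by blast
  then have "lip_width \<gamma> K n \<le> ennreal \<epsilon>" if "card F \<le> n" for n
    using that by (rule lip_width_le_net)
  then show "eventually (\<lambda>n. lip_width \<gamma> K n \<le> ennreal \<epsilon>) sequentially"
    unfolding eventually_sequentially by blast
qed

end
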